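(* In the two-unicast setting, suppose $k_{1-2}+k_{2-1}\ge\min(k_{12-1},k_{12-2})$ and $k_{2-1}\le k_{2-2}$. Set $R_2^{**}=k_{2-1}$ and $R_1^{**}=\min(k_{12-1},k_{12-2})-k_{2-1}$. Let the field $GF(q)$ and the local coding coefficients at the non-source nodes be fixed so that $\mathrm{rank}(H_{ij})=k_{j-i}$ and $\mathrm{rank}([H_{i1}~H_{i2}])=k_{12-i}$ for $i,j\in\{1,2\}$, and let $M_1$ ($k_{1-12}\times R_1^{**}$) and $M_2$ ($k_{2-12}\times R_2^{**}$) be full column rank source encoding matrices such that $[H_{i1}M_1~~H_{i2}M_2]$ has full column rank $R_1^{**}+R_2^{**}$ for $i=1,2$. Then every pair of nonnegative integers $(R_1,R_2)$ with $$R_1\le\min(k_{12-1},k_{12-2})-k_{2-1},\qquad R_2\le k_{2-2},\qquad R_1+R_2\le\mathrm{rank}([H_{21}M_1~~H_{22}])$$ is achievable.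
   Context: $G=(V,E)$ is a directed acyclic network with unit-capacity edges (each carrying one symbol of $GF(q)$ per use), sources $s_1,s_2$ (no incoming edges), terminals $t_1,t_2$ (no outgoing edges); $t_i$ wants the message of $s_i$. $k_{N_1-N_2}$ is the min-cut from $\{s_i:i\in N_1\}$ to $\{t_j:j\in N_2\}$. W.l.o.g. $s_i$ has exactly $k_{i-12}$ outgoing edges and $t_i$ has exactly $k_{12-i}$ incoming edges. For a linear network code over $GF(q)$ with fixed local coefficients at non-source nodes, $H_{ij}$ is the $k_{12-i}\times k_{j-12}$ matrix such that the vector of symbols on the incoming edges of $t_i$ equals $H_{i1}Y_1+H_{i2}Y_2$, where $Y_j$ is the vector of symbols on the outgoing edges of $s_j$; the source encoding is $Y_j=M_jU_j$ with $U_j$ the message vector of $s_j$. $(R_1,R_2)$ is achievable if for some finite field $GF(q)$ there is a linear network code such that, when $s_i$ observes $R_i$ independent symbols of $GF(q)$, $t_1$ uniquely recovers $s_1$'s message and $t_2$ uniquely recovers $s_2$'s message. *)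

theory Defs
  imports Main "Jordan_Normal_Form.DL_Rank"
begin

text \<open>A network is given by a finite set E of edges (parallel edges allowed, each edge
  carries one field symbol per use) together with tail and head maps into the vertex type.\<close>

definition edge_rel :: "'e set \<Rightarrow> ('e \<Rightarrow> 'v) \<Rightarrow> ('e \<Rightarrow> 'v) \<Rightarrow> ('v \<times> 'v) set" where
  "edge_rel E tailv headv = {(tailv e, headv e) | e. e \<in> E}"

definition in_edges :: "'e set \<Rightarrow> ('e \<Rightarrow> 'v) \<Rightarrow> 'v \<Rightarrow> 'e set" where
  "in_edges E headv v = {e \<in> E. headv e = v}"

definition out_edges :: "'e set \<Rightarrow> ('e \<Rightarrow> 'v) \<Rightarrow> 'v \<Rightarrow> 'e set" where
  "out_edges E tailv v = {e \<in> E. tailv e = v}"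

definition is_path :: "'e set \<Rightarrow> ('e \<Rightarrow> 'v) \<Rightarrow> ('e \<Rightarrow> 'v) \<Rightarrow> 'v set \<Rightarrow> 'v set \<Rightarrow> 'e list \<Rightarrow> bool" where
  "is_path E tailv headv S T es \<longleftrightarrow>
     es \<noteq> [] \<and> set es \<subseteq> E \<and> tailv (hd es) \<in> S \<and> headv (last es) \<in> T \<and>
     (\<forall>i. Suc i < length es \<longrightarrow> headv (es ! i) = tailv (es ! Suc i))"

definition is_cut :: "'e set \<Rightarrow> ('e \<Rightarrow> 'v) \<Rightarrow> ('e \<Rightarrow> 'v) \<Rightarrow> 'v set \<Rightarrow> 'v set \<Rightarrow> 'e set \<Rightarrow> bool" where
  "is_cut E tailv headv S T C \<longleftrightarrow>
     C \<subseteq> E \<and> (\<forall>es. is_path E tailv headv S T es \<longrightarrow> set es \<inter> C \<noteq> {})"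

definition mincut :: "'e set \<Rightarrow> ('e \<Rightarrow> 'v) \<Rightarrow> ('e \<Rightarrow> 'v) \<Rightarrow> 'v set \<Rightarrow> 'v set \<Rightarrow> nat" where
  "mincut E tailv headv S T = (LEAST n. \<exists>C. is_cut E tailv headv S T C \<and> card C = n)"

text \<open>The two-unicast setting, including the w.l.o.g. normalisation: s_i has exactly
  k_{i-12} outgoing edges and t_i has exactly k_{12-i} incoming edges.\<close>
definition two_unicast_network ::
  "'e set \<Rightarrow> ('e \<Rightarrow> 'v) \<Rightarrow> ('e \<Rightarrow> 'v) \<Rightarrow> 'v \<Rightarrow> 'v \<Rightarrow> 'v \<Rightarrow> 'v \<Rightarrow> bool" where
  "two_unicast_network E tailv headv s1 s2 t1 t2 \<longleftrightarrow>
     finite E \<and> acyclic (edge_rel E tailv headv) \<and> s1 \<noteq> s2 \<and> t1 \<noteq> t2 \<and>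
     in_edges E headv s1 = {} \<and> in_edges E headv s2 = {} \<and>
     out_edges E tailv t1 = {} \<and> out_edges E tailv t2 = {} \<and>
     card (out_edges E tailv s1) = mincut E tailv headv {s1} {t1, t2} \<and>
     card (out_edges E tailv s2) = mincut E tailv headv {s2} {t1, t2} \<and>
     card (in_edges E headv t1) = mincut E tailv headv {s1, s2} {t1} \<and>
     card (in_edges E headv t2) = mincut E tailv headv {s1, s2} {t2}"

text \<open>Given local coefficients beta (beta e' e is the coefficient of the symbol on e' in the
  symbol sent on e, for e leaving a non-source node), an enumeration out1/out2 of the outgoing
  edges of s1/s2, and source vectors Y1, Y2, an edge-symbol assignment x is consistent if it
  puts Y_j on the outgoing edges of s_j, follows the local linear combinations at every
  non-source node, and is 0 outside E.\<close>
definition consistent_flow ::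
  "'e set \<Rightarrow> ('e \<Rightarrow> 'v) \<Rightarrow> ('e \<Rightarrow> 'v) \<Rightarrow> 'v \<Rightarrow> 'v \<Rightarrow> (nat \<Rightarrow> 'e) \<Rightarrow> (nat \<Rightarrow> 'e) \<Rightarrow>
   ('e \<Rightarrow> 'e \<Rightarrow> 'a::field) \<Rightarrow> 'a vec \<Rightarrow> 'a vec \<Rightarrow> ('e \<Rightarrow> 'a) \<Rightarrow> bool" where
  "consistent_flow E tailv headv s1 s2 out1 out2 beta Y1 Y2 x \<longleftrightarrow>
     (\<forall>b < dim_vec Y1. x (out1 b) = Y1 $ b) \<and>
     (\<forall>b < dim_vec Y2. x (out2 b) = Y2 $ b) \<and>
     (\<forall>e \<in> E. tailv e \<noteq> s1 \<and> tailv e \<noteq> s2 \<longrightarrow>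
         x e = (\<Sum>e' \<in> in_edges E headv (tailv e). beta e' e * x e')) \<and>
     (\<forall>e. e \<notin> E \<longrightarrow> x e = 0)"

text \<open>The (unique, by acyclicity) symbols carried by the edges.\<close>
definition edge_symbols ::
  "'e set \<Rightarrow> ('e \<Rightarrow> 'v) \<Rightarrow> ('e \<Rightarrow> 'v) \<Rightarrow> 'v \<Rightarrow> 'v \<Rightarrow> (nat \<Rightarrow> 'e) \<Rightarrow> (nat \<Rightarrow> 'e) \<Rightarrow>
   ('e \<Rightarrow> 'e \<Rightarrow> 'a::field) \<Rightarrow> 'a vec \<Rightarrow> 'a vec \<Rightarrow> 'e \<Rightarrow> 'a" where
  "edge_symbols E tailv headv s1 s2 out1 out2 beta Y1 Y2 =
     (THE x. consistent_flow E tailv headv s1 s2 out1 out2 beta Y1 Y2 x)"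

definition terminal_obs ::
  "'e set \<Rightarrow> ('e \<Rightarrow> 'v) \<Rightarrow> ('e \<Rightarrow> 'v) \<Rightarrow> 'v \<Rightarrow> 'v \<Rightarrow> (nat \<Rightarrow> 'e) \<Rightarrow> (nat \<Rightarrow> 'e) \<Rightarrow>
   ('e \<Rightarrow> 'e \<Rightarrow> 'a::field) \<Rightarrow> (nat \<Rightarrow> 'e) \<Rightarrow> nat \<Rightarrow> 'a vec \<Rightarrow> 'a vec \<Rightarrow> 'a vec" where
  "terminal_obs E tailv headv s1 s2 out1 out2 beta inn n Y1 Y2 =
     vec n (\<lambda>a. edge_symbols E tailv headv s1 s2 out1 out2 beta Y1 Y2 (inn a))"

text \<open>Transfer matrices: H_{i1} (resp. H_{i2}) is the matrix whose column b is the
  observation at t_i when Y1 is the b-th unit vector and Y2 = 0 (resp. the other way round),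
  so that the observation at t_i equals H_{i1} Y1 + H_{i2} Y2.\<close>
definition transfer1 ::
  "'e set \<Rightarrow> ('e \<Rightarrow> 'v) \<Rightarrow> ('e \<Rightarrow> 'v) \<Rightarrow> 'v \<Rightarrow> 'v \<Rightarrow> (nat \<Rightarrow> 'e) \<Rightarrow> (nat \<Rightarrow> 'e) \<Rightarrow> nat \<Rightarrow> nat \<Rightarrow>
   ('e \<Rightarrow> 'e \<Rightarrow> 'a::field) \<Rightarrow> (nat \<Rightarrow> 'e) \<Rightarrow> nat \<Rightarrow> 'a mat" where
  "transfer1 E tailv headv s1 s2 out1 out2 m1 m2 beta inn n =
     mat n m1 (\<lambda>(a, b). terminal_obs E tailv headv s1 s2 out1 out2 beta inn n
                          (unit_vec m1 b) (0\<^sub>v m2) $ a)"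

definition transfer2 ::
  "'e set \<Rightarrow> ('e \<Rightarrow> 'v) \<Rightarrow> ('e \<Rightarrow> 'v) \<Rightarrow> 'v \<Rightarrow> 'v \<Rightarrow> (nat \<Rightarrow> 'e) \<Rightarrow> (nat \<Rightarrow> 'e) \<Rightarrow> nat \<Rightarrow> nat \<Rightarrow>
   ('e \<Rightarrow> 'e \<Rightarrow> 'a::field) \<Rightarrow> (nat \<Rightarrow> 'e) \<Rightarrow> nat \<Rightarrow> 'a mat" where
  "transfer2 E tailv headv s1 s2 out1 out2 m1 m2 beta inn n =
     mat n m2 (\<lambda>(a, b). terminal_obs E tailv headv s1 s2 out1 out2 beta inn n
                          (0\<^sub>v m1) (unit_vec m2 b) $ a)"

definition mrank :: "'a::field mat \<Rightarrow> nat" where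
  "mrank A = vec_space.rank (dim_row A) A"

definition hcat :: "'a mat \<Rightarrow> 'a mat \<Rightarrow> 'a mat" where
  "hcat A B = mat (dim_row A) (dim_col A + dim_col B)
     (\<lambda>(i, j). if j < dim_col A then A $$ (i, j) else B $$ (i, j - dim_col A))"

text \<open>(R1, R2) is achievable over the field 'a: there are local coefficients at the non-source
  nodes and source encoding matrices M1 (k_{1-12} x R1), M2 (k_{2-12} x R2) such that, with
  Y_j = M_j U_j, the symbols seen by t1 determine U1 uniquely and those seen by t2 determine U2
  uniquely, for all messages U1 in 'a^R1, U2 in 'a^R2.\<close>
definition achievable_over ::
  "'a::field itself \<Rightarrow> 'e set \<Rightarrow> ('e \<Rightarrow> 'v) \<Rightarrow> ('e \<Rightarrow> 'v) \<Rightarrow> 'v \<Rightarrow> 'v \<Rightarrow> 'v \<Rightarrow> 'v \<Rightarrow>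
   (nat \<Rightarrow> 'e) \<Rightarrow> (nat \<Rightarrow> 'e) \<Rightarrow> (nat \<Rightarrow> 'e) \<Rightarrow> (nat \<Rightarrow> 'e) \<Rightarrow> nat \<Rightarrow> nat \<Rightarrow> bool" where
  "achievable_over TYPE('a) E tailv headv s1 s2 t1 t2 out1 out2 in1 in2 R1 R2 \<longleftrightarrow>
     (let m1 = card (out_edges E tailv s1); m2 = card (out_edges E tailv s2);
          n1 = card (in_edges E headv t1); n2 = card (in_edges E headv t2) in
      \<exists>(beta :: 'e \<Rightarrow> 'e \<Rightarrow> 'a) (M1 :: 'a mat) (M2 :: 'a mat).
        M1 \<in> carrier_mat m1 R1 \<and> M2 \<in> carrier_mat m2 R2 \<and>
        (\<forall>U1 U1' U2 U2'. U1 \<in> carrier_vec R1 \<longrightarrow> U1' \<in> carrier_vec R1 \<longrightarrow>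
            U2 \<in> carrier_vec R2 \<longrightarrow> U2' \<in> carrier_vec R2 \<longrightarrow>
           (terminal_obs E tailv headv s1 s2 out1 out2 beta in1 n1 (M1 *\<^sub>v U1) (M2 *\<^sub>v U2) =
            terminal_obs E tailv headv s1 s2 out1 out2 beta in1 n1 (M1 *\<^sub>v U1') (M2 *\<^sub>v U2')
              \<longrightarrow> U1 = U1') \<and>
           (terminal_obs E tailv headv s1 s2 out1 out2 beta in2 n2 (M1 *\<^sub>v U1) (M2 *\<^sub>v U2) =
            terminal_obs E tailv headv s1 s2 out1 out2 beta in2 n2 (M1 *\<^sub>v U1') (M2 *\<^sub>v U2')
              \<longrightarrow> U2 = U2')))"

end

theory Submission
  imports Defs "HOL-Library.Cardinality"
begin

(* By linearity of the network code (terminal_obs_linear) the observation at t_i is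
   H_i1 Y1 + H_i2 Y2, so it suffices to find encoding matrices M1', M2' for which t1 can
   recover U1 from H_11 M1' U1 + H_12 M2' U2 and t2 can recover U2 from H_21 M1' U1 + H_22 M2' U2.
   With A = H_21 M1, of full column rank R1**, we pick R2 vectors W in the column space of H_22 and
   R1 vectors P in the column space of A such that W @ P is independent (choose_code_vectors),
   and realise them as H_22 M2' = [W] and A Q = [P], M1' = M1 Q (source_reencoding).
   Terminal t2 decodes by the independence of W @ P; terminal t1 decodes because the column
   space of H_12 M2 is all of the column space of H_12 and [H_11 M1, H_12 M2] has full rank.

   Linear algebra is done by counting: over a field with q elements the column span of an
   n-row matrix of rank d has q^d elements, and a list of l vectors is independent iff its span
   has q^l elements.  This makes greedy extension of independent families elementary. *)

section \<open>Spans and independence of lists of vectors\<close>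

lemma vec_eq_of_minus_eq_zero:
  assumes "x - y = (0\<^sub>v n :: 'a::ab_group_add vec)" "x \<in> carrier_vec n" "y \<in> carrier_vec n"
  shows "x = y"
proof (rule eq_vecI)
  fix i assume "i < dim_vec y"
  thus "x $ i = y $ i" using arg_cong[OF assms(1), of "\<lambda>v. v $ i"] assms(2,3) by simp
qed (use assms in simp)

definition colspan :: "nat \<Rightarrow> 'a::field vec list \<Rightarrow> 'a vec set" where
  "colspan n ws = (\<lambda>x. mat_of_cols n ws *\<^sub>v x) ` carrier_vec (length ws)"

definition col_indep :: "nat \<Rightarrow> 'a::field vec list \<Rightarrow> bool" where
  "col_indep n ws \<longleftrightarrow>
     (\<forall>x\<in>carrier_vec (length ws). mat_of_cols n ws *\<^sub>v x = 0\<^sub>v n \<longrightarrow> x = 0\<^sub>v (length ws))"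

lemma mat_of_cols_append_mult_vec:
  assumes u: "u \<in> carrier_vec (length xs)" and v: "v \<in> carrier_vec (length ys)"
  shows "mat_of_cols n (xs @ ys) *\<^sub>v (u @\<^sub>v v) = mat_of_cols n xs *\<^sub>v u + mat_of_cols n ys *\<^sub>v v"
proof (rule eq_vecI)
  fix i assume "i < dim_vec (mat_of_cols n xs *\<^sub>v u + mat_of_cols n ys *\<^sub>v v)"
  hence i: "i < n" by simp
  have row: "row (mat_of_cols n (xs @ ys)) i = row (mat_of_cols n xs) i @\<^sub>v row (mat_of_cols n ys) i"
    by (rule eq_vecI) (auto simp: mat_of_cols_def nth_append i)
  have r1: "row (mat_of_cols n xs) i \<in> carrier_vec (length xs)"
    and r2: "row (mat_of_cols n ys) i \<in> carrier_vec (length ys)" by (auto intro!: carrier_vecI)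
  show "(mat_of_cols n (xs @ ys) *\<^sub>v (u @\<^sub>v v)) $ i = (mat_of_cols n xs *\<^sub>v u + mat_of_cols n ys *\<^sub>v v) $ i"
    using i by (simp add: row scalar_prod_append[OF r1 r2 u v])
qed auto

lemma mat_of_cols_mult_vec_carrier[simp]: "mat_of_cols n ws *\<^sub>v x \<in> carrier_vec n"
  by (rule carrier_vecI) simp

lemma colspan_carrier: "colspan n ws \<subseteq> carrier_vec n"
  unfolding colspan_def by auto

lemma colspan_add: "a \<in> colspan n ws \<Longrightarrow> b \<in> colspan n ws \<Longrightarrow> a + b \<in> colspan n ws"
proof -
  assume "a \<in> colspan n ws" "b \<in> colspan n ws"
  then obtain u v where u: "u \<in> carrier_vec (length ws)" "a = mat_of_cols n ws *\<^sub>v u"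
    and v: "v \<in> carrier_vec (length ws)" "b = mat_of_cols n ws *\<^sub>v v" unfolding colspan_def by auto
  have "a + b = mat_of_cols n ws *\<^sub>v (u + v)"
    using mult_add_distrib_mat_vec[OF mat_of_cols_carrier(1) u(1) v(1)] u v by simp
  moreover have "u + v \<in> carrier_vec (length ws)" using u v by simp
  ultimately show ?thesis unfolding colspan_def by blast
qed

lemma colspan_append: "colspan n (xs @ ys) = {a + b | a b. a \<in> colspan n xs \<and> b \<in> colspan n ys}"
proof (intro subset_antisym subsetI)
  fix w assume "w \<in> colspan n (xs @ ys)"
  then obtain x where x: "x \<in> carrier_vec (length xs + length ys)"
    and w: "w = mat_of_cols n (xs @ ys) *\<^sub>v x" unfolding colspan_def by auto
  have xe: "vec_first x (length xs) @\<^sub>v vec_last x (length ys) = x" using x by simp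
  have "w = mat_of_cols n xs *\<^sub>v vec_first x (length xs) + mat_of_cols n ys *\<^sub>v vec_last x (length ys)"
    unfolding w by (subst xe[symmetric], rule mat_of_cols_append_mult_vec) auto
  moreover have "mat_of_cols n xs *\<^sub>v vec_first x (length xs) \<in> colspan n xs"
    unfolding colspan_def by (rule imageI) simp
  moreover have "mat_of_cols n ys *\<^sub>v vec_last x (length ys) \<in> colspan n ys"
    unfolding colspan_def by (rule imageI) simp
  ultimately show "w \<in> {a + b | a b. a \<in> colspan n xs \<and> b \<in> colspan n ys}" by blast
next
  fix w assume "w \<in> {a + b | a b. a \<in> colspan n xs \<and> b \<in> colspan n ys}"
  then obtain u v where u: "u \<in> carrier_vec (length xs)" and v: "v \<in> carrier_vec (length ys)"
    and w: "w = mat_of_cols n xs *\<^sub>v u + mat_of_cols n ys *\<^sub>v v" unfolding colspan_def by blast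
  have "w = mat_of_cols n (xs @ ys) *\<^sub>v (u @\<^sub>v v)" using mat_of_cols_append_mult_vec[OF u v] w by simp
  moreover have "u @\<^sub>v v \<in> carrier_vec (length (xs @ ys))" using u v by auto
  ultimately show "w \<in> colspan n (xs @ ys)" unfolding colspan_def by blast
qed

lemma colspan_zero: "0\<^sub>v n \<in> colspan n ws"
proof -
  have "mat_of_cols n ws *\<^sub>v 0\<^sub>v (length ws) = 0\<^sub>v n" by auto
  thus ?thesis unfolding colspan_def by (metis image_eqI zero_carrier_vec)
qed

lemma colspan_append_left: "colspan n xs \<subseteq> colspan n (xs @ ys)"
proof
  fix a assume a: "a \<in> colspan n xs"
  hence "a \<in> carrier_vec n" using colspan_carrier by blast
  hence "a = a + 0\<^sub>v n" by simp
  thus "a \<in> colspan n (xs @ ys)" unfolding colspan_append using a colspan_zero by blast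
qed

lemma colspan_append_right: "colspan n ys \<subseteq> colspan n (xs @ ys)"
proof
  fix a assume a: "a \<in> colspan n ys"
  hence "a \<in> carrier_vec n" using colspan_carrier by blast
  hence "a = 0\<^sub>v n + a" by simp
  thus "a \<in> colspan n (xs @ ys)" unfolding colspan_append using a colspan_zero by blast
qed

lemma colspan_append_commute: "colspan n (xs @ ys) = colspan n (ys @ xs)"
proof -
  have comm: "a + b = b + a" if "a \<in> colspan n us" "b \<in> colspan n vs" for a b us vs
    using that colspan_carrier by (blast intro: comm_add_vec)
  show ?thesis unfolding colspan_append
  proof (intro subset_antisym subsetI)
    fix x assume "x \<in> {a + b |a b. a \<in> colspan n xs \<and> b \<in> colspan n ys}"
    then obtain a b where "x = a + b" "a \<in> colspan n xs" "b \<in> colspan n ys" by blast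
    thus "x \<in> {a + b |a b. a \<in> colspan n ys \<and> b \<in> colspan n xs}" using comm by blast
  next
    fix x assume "x \<in> {a + b |a b. a \<in> colspan n ys \<and> b \<in> colspan n xs}"
    then obtain a b where "x = a + b" "a \<in> colspan n ys" "b \<in> colspan n xs" by blast
    thus "x \<in> {a + b |a b. a \<in> colspan n xs \<and> b \<in> colspan n ys}" using comm by blast
  qed
qed

lemma colspan_smult: "a \<in> colspan n ws \<Longrightarrow> c \<cdot>\<^sub>v a \<in> colspan n ws"
proof -
  assume "a \<in> colspan n ws"
  then obtain u where u: "u \<in> carrier_vec (length ws)" "a = mat_of_cols n ws *\<^sub>v u"
    unfolding colspan_def by auto
  have "c \<cdot>\<^sub>v a = mat_of_cols n ws *\<^sub>v (c \<cdot>\<^sub>v u)"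
    using mult_mat_vec[OF mat_of_cols_carrier(1) u(1)] u by simp
  moreover have "c \<cdot>\<^sub>v u \<in> carrier_vec (length ws)" using u by simp
  ultimately show ?thesis unfolding colspan_def by blast
qed

lemma colspan_cols:
  assumes X: "X \<in> carrier_mat n c"
  shows "colspan n (cols X) = (\<lambda>x. X *\<^sub>v x) ` carrier_vec c"
  using X mat_of_cols_cols[of X] unfolding colspan_def by simp

lemma col_indep_cols_iff:
  assumes X: "X \<in> carrier_mat n c"
  shows "col_indep n (cols X) \<longleftrightarrow> (\<forall>x\<in>carrier_vec c. X *\<^sub>v x = 0\<^sub>v n \<longrightarrow> x = 0\<^sub>v c)"
  using X mat_of_cols_cols[of X] unfolding col_indep_def by simp

lemma col_indep_append_iff:
  "col_indep n (xs @ ys) \<longleftrightarrow>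
     (\<forall>u \<in> carrier_vec (length xs). \<forall>v \<in> carrier_vec (length ys).
        mat_of_cols n xs *\<^sub>v u + mat_of_cols n ys *\<^sub>v v = 0\<^sub>v n \<longrightarrow>
        u = 0\<^sub>v (length xs) \<and> v = 0\<^sub>v (length ys))" (is "_ \<longleftrightarrow> ?blocks")
proof
  assume I: "col_indep n (xs @ ys)"
  show ?blocks
  proof (intro ballI impI)
    fix u v assume u: "u \<in> carrier_vec (length xs)" and v: "v \<in> carrier_vec (length ys)"
      and e: "mat_of_cols n xs *\<^sub>v u + mat_of_cols n ys *\<^sub>v v = 0\<^sub>v n"
    have "u @\<^sub>v v \<in> carrier_vec (length (xs @ ys))" using u v by auto
    moreover have "mat_of_cols n (xs @ ys) *\<^sub>v (u @\<^sub>v v) = 0\<^sub>v n"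
      using mat_of_cols_append_mult_vec[OF u v] e by simp
    ultimately have "u @\<^sub>v v = 0\<^sub>v (length xs) @\<^sub>v 0\<^sub>v (length ys)"
      using I unfolding col_indep_def by (auto intro!: eq_vecI)
    thus "u = 0\<^sub>v (length xs) \<and> v = 0\<^sub>v (length ys)" using u by simp
  qed
next
  assume H: ?blocks
  show "col_indep n (xs @ ys)" unfolding col_indep_def
  proof (intro ballI impI)
    fix x assume x: "x \<in> carrier_vec (length (xs @ ys))" and e: "mat_of_cols n (xs @ ys) *\<^sub>v x = 0\<^sub>v n"
    have xe: "vec_first x (length xs) @\<^sub>v vec_last x (length ys) = x" using x by simp
    have "mat_of_cols n xs *\<^sub>v vec_first x (length xs) + mat_of_cols n ys *\<^sub>v vec_last x (length ys)
      = mat_of_cols n (xs @ ys) *\<^sub>v x"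
      by (subst xe[symmetric], rule mat_of_cols_append_mult_vec[symmetric]) auto
    hence "vec_first x (length xs) = 0\<^sub>v (length xs) \<and> vec_last x (length ys) = 0\<^sub>v (length ys)"
      using H e vec_first_carrier vec_last_carrier by metis
    hence "x = 0\<^sub>v (length xs) @\<^sub>v 0\<^sub>v (length ys)" using xe by simp
    thus "x = 0\<^sub>v (length (xs @ ys))" by (auto intro!: eq_vecI)
  qed
qed

lemma col_indep_appendD:
  assumes I: "col_indep n (xs @ ys)"
  shows "col_indep n xs" and "col_indep n ys"
proof -
  have z: "mat_of_cols n zs *\<^sub>v 0\<^sub>v (length zs) = 0\<^sub>v n" for zs :: "'a vec list" by auto
  show "col_indep n xs" unfolding col_indep_def
  proof (intro ballI impI)
    fix u assume u: "u \<in> carrier_vec (length xs)" and e: "mat_of_cols n xs *\<^sub>v u = 0\<^sub>v n"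
    have "mat_of_cols n xs *\<^sub>v u + mat_of_cols n ys *\<^sub>v 0\<^sub>v (length ys) = 0\<^sub>v n" unfolding z e by simp
    thus "u = 0\<^sub>v (length xs)" using I[unfolded col_indep_append_iff] u zero_carrier_vec by blast
  qed
  show "col_indep n ys" unfolding col_indep_def
  proof (intro ballI impI)
    fix v assume v: "v \<in> carrier_vec (length ys)" and e: "mat_of_cols n ys *\<^sub>v v = 0\<^sub>v n"
    have "mat_of_cols n xs *\<^sub>v 0\<^sub>v (length xs) + mat_of_cols n ys *\<^sub>v v = 0\<^sub>v n" unfolding z e by simp
    thus "v = 0\<^sub>v (length ys)" using I[unfolded col_indep_append_iff] v zero_carrier_vec by blast
  qed
qed

lemma col_indep_snoc:
  assumes I: "col_indep n ws" and w: "w \<in> carrier_vec n" and nw: "w \<notin> colspan n ws"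
  shows "col_indep n (ws @ [w])"
  unfolding col_indep_append_iff
proof (intro ballI impI)
  fix u v assume u: "u \<in> carrier_vec (length ws)" and v: "v \<in> carrier_vec (length [w])"
    and e: "mat_of_cols n ws *\<^sub>v u + mat_of_cols n [w] *\<^sub>v v = 0\<^sub>v n"
  have single: "mat_of_cols n [w] *\<^sub>v v = (v $ 0) \<cdot>\<^sub>v w"
    by (rule eq_vecI) (use w v in \<open>auto simp: mat_of_cols_def scalar_prod_def row_def intro: mult.commute\<close>)
  have e2: "mat_of_cols n ws *\<^sub>v u + (v $ 0) \<cdot>\<^sub>v w = 0\<^sub>v n" using e single by simp
  have a: "mat_of_cols n ws *\<^sub>v u \<in> colspan n ws" unfolding colspan_def using u by (rule imageI)
  have v0: "v $ 0 = 0"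
  proof (rule ccontr)
    assume nz: "v $ 0 \<noteq> 0"
    have "w = (- 1 / v $ 0) \<cdot>\<^sub>v (mat_of_cols n ws *\<^sub>v u)"
    proof (rule eq_vecI)
      fix i assume "i < dim_vec ((- 1 / v $ 0) \<cdot>\<^sub>v (mat_of_cols n ws *\<^sub>v u))"
      hence i: "i < n" by simp
      have "(mat_of_cols n ws *\<^sub>v u) $ i + v $ 0 * w $ i = 0"
        using arg_cong[OF e2, of "\<lambda>x. x $ i"] i w by simp
      hence "v $ 0 * w $ i = - (mat_of_cols n ws *\<^sub>v u) $ i"
        by (simp add: eq_neg_iff_add_eq_0 add.commute)
      hence "w $ i = - (mat_of_cols n ws *\<^sub>v u) $ i / v $ 0" using nz by (simp add: field_simps)
      thus "w $ i = ((- 1 / v $ 0) \<cdot>\<^sub>v (mat_of_cols n ws *\<^sub>v u)) $ i" using i by simp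
    qed (use w in simp)
    thus False using nw colspan_smult[OF a] by simp
  qed
  have "(v $ 0) \<cdot>\<^sub>v w = 0\<^sub>v n" using v0 w by auto
  hence "mat_of_cols n ws *\<^sub>v u = 0\<^sub>v n" using e2 by simp
  hence "u = 0\<^sub>v (length ws)" using I u unfolding col_indep_def by blast
  moreover have "v = 0\<^sub>v (length [w])" using v v0 by (auto intro!: eq_vecI)
  ultimately show "u = 0\<^sub>v (length ws) \<and> v = 0\<^sub>v (length [w])" by simp
qed

section \<open>Counting vectors over a finite field\<close>

lemma card_carrier_vec: "card (carrier_vec n :: 'a::finite vec set) = CARD('a) ^ n"
proof -
  have "bij_betw list_of_vec (carrier_vec n :: 'a vec set) {xs. set xs \<subseteq> UNIV \<and> length xs = n}"
  proof (rule bij_betwI[where g = vec_of_list])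
    show "list_of_vec \<in> carrier_vec n \<rightarrow> {xs. set xs \<subseteq> UNIV \<and> length xs = n}" by auto
    show "vec_of_list \<in> {xs. set xs \<subseteq> (UNIV :: 'a set) \<and> length xs = n} \<rightarrow> carrier_vec n"
      by (auto intro!: carrier_vecI)
  qed (simp_all add: vec_list list_vec)
  hence "card (carrier_vec n :: 'a vec set) = card {xs. set xs \<subseteq> (UNIV :: 'a set) \<and> length xs = n}"
    by (rule bij_betw_same_card)
  also have "\<dots> = CARD('a) ^ n" by (rule card_lists_length_eq) simp
  finally show ?thesis .
qed

lemma finite_carrier_vec[simp]: "finite (carrier_vec n :: 'a::finite vec set)"
  by (rule card_ge_0_finite) (simp add: card_carrier_vec)

lemma one_less_card_field: "1 < CARD('a::{field,finite})"
proof -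
  have "card {0::'a, 1} \<le> CARD('a)" by (intro card_mono) simp_all
  thus ?thesis by simp
qed

lemma finite_colspan: "finite (colspan n (ws :: 'a::{field,finite} vec list))"
  unfolding colspan_def by simp

lemma inj_on_mult_mat_vec_iff:
  assumes X: "X \<in> carrier_mat n c"
  shows "inj_on (\<lambda>x. X *\<^sub>v x) (carrier_vec c) \<longleftrightarrow>
    (\<forall>x\<in>carrier_vec c. X *\<^sub>v x = 0\<^sub>v n \<longrightarrow> x = (0\<^sub>v c :: 'a::field vec))"
proof
  assume "inj_on (\<lambda>x. X *\<^sub>v x) (carrier_vec c)"
  moreover have "X *\<^sub>v 0\<^sub>v c = 0\<^sub>v n" using X by auto
  ultimately show "\<forall>x\<in>carrier_vec c. X *\<^sub>v x = 0\<^sub>v n \<longrightarrow> x = 0\<^sub>v c"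
    using inj_onD[of "\<lambda>x. X *\<^sub>v x" "carrier_vec c"] by (metis zero_carrier_vec)
next
  assume K: "\<forall>x\<in>carrier_vec c. X *\<^sub>v x = 0\<^sub>v n \<longrightarrow> x = 0\<^sub>v c"
  show "inj_on (\<lambda>x. X *\<^sub>v x) (carrier_vec c)"
  proof (rule inj_onI)
    fix x y assume x: "x \<in> carrier_vec c" and y: "y \<in> carrier_vec c" and e: "X *\<^sub>v x = X *\<^sub>v y"
    have "X *\<^sub>v (x - y) = X *\<^sub>v x - X *\<^sub>v y" by (rule mult_minus_distrib_mat_vec[OF X x y])
    also have "\<dots> = 0\<^sub>v n" unfolding e using X y by simp
    finally have "x - y = 0\<^sub>v c" using K x y by simp
    thus "x = y" using x y by (rule vec_eq_of_minus_eq_zero)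
  qed
qed

lemma col_indep_iff_card_colspan:
  "col_indep n (ws :: 'a::{field,finite} vec list) \<longleftrightarrow> card (colspan n ws) = CARD('a) ^ length ws"
proof -
  have "col_indep n ws \<longleftrightarrow> inj_on (\<lambda>x. mat_of_cols n ws *\<^sub>v x) (carrier_vec (length ws))"
    unfolding col_indep_def by (rule inj_on_mult_mat_vec_iff[symmetric]) simp
  also have "\<dots> \<longleftrightarrow> card (colspan n ws) = card (carrier_vec (length ws) :: 'a vec set)"
    unfolding colspan_def using card_image eq_card_imp_inj_on[OF finite_carrier_vec] by blast
  finally show ?thesis by (simp add: card_carrier_vec)
qed

lemma col_indep_extend:
  fixes vs us :: "'a::{field,finite} vec list"
  assumes I: "col_indep n vs"
    and C: "CARD('a) ^ (length vs + j) \<le> card (colspan n (vs @ us))"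
  shows "\<exists>ws. length ws = j \<and> set ws \<subseteq> colspan n us \<and> col_indep n (vs @ ws)"
  using C
proof (induction j)
  case 0
  show ?case using I by (intro exI[of _ "[]"]) simp
next
  case (Suc j)
  have q: "1 < CARD('a)" by (rule one_less_card_field)
  have "CARD('a) ^ (length vs + j) \<le> CARD('a) ^ (length vs + Suc j)"
    using q by (intro power_increasing) auto
  with Suc.prems have "CARD('a) ^ (length vs + j) \<le> card (colspan n (vs @ us))" by linarith
  then obtain ws where ws: "length ws = j" "set ws \<subseteq> colspan n us" "col_indep n (vs @ ws)"
    using Suc.IH by blast
  have "card (colspan n (vs @ ws)) = CARD('a) ^ (length vs + j)"
    using ws(3)[unfolded col_indep_iff_card_colspan] ws(1) by simp
  also have "\<dots> < CARD('a) ^ (length vs + Suc j)"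
    using q by (intro power_strict_increasing) auto
  finally have lt: "card (colspan n (vs @ ws)) < card (colspan n (vs @ us))" using Suc.prems by linarith
  have "\<not> colspan n (vs @ us) \<subseteq> colspan n (vs @ ws)"
  proof
    assume "colspan n (vs @ us) \<subseteq> colspan n (vs @ ws)"
    hence "card (colspan n (vs @ us)) \<le> card (colspan n (vs @ ws))" by (intro card_mono finite_colspan)
    thus False using lt by simp
  qed
  then obtain t where t: "t \<in> colspan n (vs @ us)" "t \<notin> colspan n (vs @ ws)" by blast
  then obtain a b where ab: "t = a + b" "a \<in> colspan n vs" "b \<in> colspan n us"
    unfolding colspan_append[of n vs us] by blast
  have a': "a \<in> colspan n (vs @ ws)" using ab(2) colspan_append_left by blast
  have nb: "b \<notin> colspan n (vs @ ws)" using colspan_add[OF a'] t ab(1) by blast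
  have bc: "b \<in> carrier_vec n" using ab(3) colspan_carrier by blast
  have "col_indep n ((vs @ ws) @ [b])" by (rule col_indep_snoc[OF ws(3) bc nb])
  thus ?case using ws ab(3) by (intro exI[of _ "ws @ [b]"]) simp
qed

section \<open>Column spans of matrices and rank\<close>

lemma colspan_eq_col_space: "colspan n ws = vec_space.col_space n (mat_of_cols n ws)"
proof -
  interpret V: vec_space "TYPE('a::field)" n .
  have "V.col_space (mat_of_cols n ws) =
     {y \<in> carrier_vec n. \<exists>x\<in>carrier_vec (length ws). mat_of_cols n ws *\<^sub>v x = y}"
    using V.col_space_eq[OF mat_of_cols_carrier(1)] by simp
  thus ?thesis unfolding colspan_def by auto
qed

lemma basis_list_of_cols:
  fixes A :: "'a::field mat"
  assumes A: "A \<in> carrier_mat n c"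
  shows "\<exists>bl. col_indep n bl \<and> colspan n bl = colspan n (cols A) \<and> length bl = mrank A"
proof -
  interpret V: vec_space "TYPE('a)" n .
  let ?S = "set (cols A)"
  have Sc: "?S \<subseteq> carrier_vec n" using A cols_dim by blast
  have vs: "vectorspace class_ring (V.span_vs ?S)"
    using Sc V.span_is_subspace subspace_def V.subspace_is_vs by simp
  have fin: "vectorspace.fin_dim class_ring (V.span_vs ?S)"
    using V.fin_dim_span_cols[OF A] by simp
  obtain \<beta> where fb: "finite \<beta>" "vectorspace.basis class_ring (V.span_vs ?S) \<beta>"
    using vectorspace.finite_basis_exists[OF vs fin] by blast
  have b1: "\<beta> \<subseteq> V.span ?S"
    and b2: "\<not> LinearCombinations.module.lin_dep class_ring (V.span_vs ?S) \<beta>"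
    and b3: "LinearCombinations.module.span class_ring (V.span_vs ?S) \<beta> = V.span ?S"
    using fb(2) unfolding vectorspace.basis_def[OF vs] by auto
  have sub: "submodule class_ring (V.span ?S) V.V" by (rule V.span_is_submodule[OF Sc])
  have span_basis: "V.span \<beta> = V.span ?S"
    using V.span_li_not_depend(1)[OF b1 sub] b3 by simp
  have indep_basis: "\<not> V.lin_dep \<beta>"
    using V.span_li_not_depend(2)[OF b1 sub] b2 by simp
  obtain bl where bl: "distinct bl" "set bl = \<beta>" using finite_distinct_list[OF fb(1)] by blast
  have blc: "set bl \<subseteq> carrier_vec n" using bl(2) b1 V.span_closed[OF Sc] by blast
  have "colspan n bl = V.span (set bl)"
    unfolding colspan_eq_col_space V.col_space_def using blc by simp
  also have "\<dots> = colspan n (cols A)"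
    unfolding colspan_eq_col_space V.col_space_def using Sc bl span_basis by simp
  finally have same_span: "colspan n bl = colspan n (cols A)" .
  have indep_bl: "col_indep n bl" unfolding col_indep_def
  proof (intro ballI impI)
    fix x assume x: "x \<in> carrier_vec (length bl)" and e: "mat_of_cols n bl *\<^sub>v x = 0\<^sub>v n"
    show "x = 0\<^sub>v (length bl)"
    proof (rule ccontr)
      assume nz: "x \<noteq> 0\<^sub>v (length bl)"
      have "V.lin_dep (set (cols (mat_of_cols n bl)))"
        by (rule V.lin_depI[OF mat_of_cols_carrier(1) x nz e]) (use blc bl in simp)
      thus False using indep_basis blc bl by simp
    qed
  qed
  have "length bl = card \<beta>" using bl distinct_card by fastforce
  also have "\<dots> = V.rank A" using vectorspace.dim_basis[OF vs fb] unfolding V.rank_def by simp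
  also have "\<dots> = mrank A" unfolding mrank_def using A by simp
  finally show ?thesis using indep_bl same_span by blast
qed

lemma card_colspan_rank:
  fixes A :: "'a::{field,finite} mat"
  assumes A: "A \<in> carrier_mat n c"
  shows "card (colspan n (cols A)) = CARD('a) ^ mrank A"
proof -
  obtain bl where "col_indep n bl" "colspan n bl = colspan n (cols A)" "length bl = mrank A"
    using basis_list_of_cols[OF A] by blast
  thus ?thesis using col_indep_iff_card_colspan[of n bl] by simp
qed

lemma full_rank_iff_col_indep:
  fixes X :: "'a::{field,finite} mat"
  assumes X: "X \<in> carrier_mat n c"
  shows "mrank X = c \<longleftrightarrow> col_indep n (cols X)"
  using X card_colspan_rank[OF X] col_indep_iff_card_colspan[of n "cols X"]
    power_inject_exp[OF one_less_card_field] by auto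

lemma hcat_carrier:
  assumes "X \<in> carrier_mat n a" "Y \<in> carrier_mat n b"
  shows "hcat X Y \<in> carrier_mat n (a + b)"
  using assms by (simp add: hcat_def)

lemma cols_hcat:
  assumes X: "X \<in> carrier_mat n a" and Y: "Y \<in> carrier_mat n b"
  shows "cols (hcat X Y) = cols X @ cols Y"
proof -
  have cs: "set (cols X @ cols Y) \<subseteq> carrier_vec n"
    using X Y cols_dim[of X] cols_dim[of Y] by auto
  have "hcat X Y = mat_of_cols n (cols X @ cols Y)"
    by (rule eq_matI) (use X Y in \<open>auto simp: hcat_def mat_of_cols_def nth_append\<close>)
  thus ?thesis using cs by simp
qed

lemma full_rank_hcat:
  fixes X Y :: "'a::{field,finite} mat"
  assumes X: "X \<in> carrier_mat n a" and Y: "Y \<in> carrier_mat n b"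
    and r: "mrank (hcat X Y) = a + b"
  shows "mrank X = a" and "mrank Y = b"
  using r col_indep_appendD
  unfolding full_rank_iff_col_indep[OF hcat_carrier[OF X Y]] cols_hcat[OF X Y]
    full_rank_iff_col_indep[OF X] full_rank_iff_col_indep[OF Y] by blast+

lemma colspan_mult_subset:
  assumes X: "X \<in> carrier_mat n m" and M: "M \<in> carrier_mat m a"
  shows "colspan n (cols (X * M)) \<subseteq> colspan n (cols X)"
  unfolding colspan_cols[OF X] colspan_cols[OF mult_carrier_mat[OF X M]]
  using X M by (auto intro!: image_eqI[where x = "M *\<^sub>v _"])

lemma colspan_mult_eq:
  fixes X M :: "'a::{field,finite} mat"
  assumes X: "X \<in> carrier_mat n m" and M: "M \<in> carrier_mat m a"
    and r: "mrank (X * M) = mrank X"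
  shows "colspan n (cols (X * M)) = colspan n (cols X)"
  by (rule card_subset_eq[OF finite_colspan colspan_mult_subset[OF X M]])
    (simp add: card_colspan_rank[OF X] card_colspan_rank[OF mult_carrier_mat[OF X M]] r)

lemma factor_through_colspan:
  assumes X: "X \<in> carrier_mat n c" and ps: "set ps \<subseteq> colspan n (cols X)"
  shows "\<exists>Q \<in> carrier_mat c (length ps). X * Q = mat_of_cols n ps"
proof -
  have "\<exists>zs. set zs \<subseteq> carrier_vec c \<and> map (\<lambda>z. X *\<^sub>v z) zs = ps"
    using ps
  proof (induction ps)
    case (Cons p ps)
    then obtain zs where "set zs \<subseteq> carrier_vec c" "map (\<lambda>z. X *\<^sub>v z) zs = ps" by auto
    moreover obtain z where "z \<in> carrier_vec c" "p = X *\<^sub>v z"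
      using Cons.prems colspan_cols[OF X] by auto
    ultimately show ?case by (intro exI[of _ "z # zs"]) simp
  qed simp
  then obtain zs where zs: "set zs \<subseteq> carrier_vec c" "map (\<lambda>z. X *\<^sub>v z) zs = ps" by blast
  have "X * mat_of_cols c zs = mat_of_cols n ps"
  proof (rule eq_matI)
    fix i j assume "i < dim_row (mat_of_cols n ps)" "j < dim_col (mat_of_cols n ps)"
    moreover from this have "col (mat_of_cols c zs) j = zs ! j"
      using zs by (intro col_mat_of_cols) auto
    ultimately show "(X * mat_of_cols c zs) $$ (i, j) = mat_of_cols n ps $$ (i, j)"
      using X zs(2)[symmetric] by (simp add: mat_of_cols_def)
  qed (use X zs in auto)
  thus ?thesis using zs by (intro bexI[of _ "mat_of_cols c zs"]) auto
qed

section \<open>Decodability and re-encoding at the sources\<close>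

text \<open>A receiver observing X x + Y y can recover x: the map (x, y) \<mapsto> X x + Y y has no
  kernel element with nonzero first component.\<close>
definition recovers_first :: "'a::field mat \<Rightarrow> 'a mat \<Rightarrow> bool" where
  "recovers_first X Y \<longleftrightarrow>
     (\<forall>x\<in>carrier_vec (dim_col X). \<forall>y\<in>carrier_vec (dim_col Y).
        X *\<^sub>v x + Y *\<^sub>v y = 0\<^sub>v (dim_row X) \<longrightarrow> x = 0\<^sub>v (dim_col X))"

lemma recovers_firstD:
  assumes "recovers_first X Y" "X \<in> carrier_mat n a" "Y \<in> carrier_mat n b"
    and "x \<in> carrier_vec a" "y \<in> carrier_vec b" "X *\<^sub>v x + Y *\<^sub>v y = 0\<^sub>v n"
  shows "x = 0\<^sub>v a"
  using assms unfolding recovers_first_def by auto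

lemma recovers_first_injective:
  assumes X: "X \<in> carrier_mat n a" and Y: "Y \<in> carrier_mat n b" and R: "recovers_first X Y"
    and u: "u \<in> carrier_vec a" and u': "u' \<in> carrier_vec a"
    and v: "v \<in> carrier_vec b" and v': "v' \<in> carrier_vec b"
    and e: "X *\<^sub>v u + Y *\<^sub>v v = X *\<^sub>v u' + Y *\<^sub>v v'"
  shows "u = u'"
proof -
  have Xm: "X *\<^sub>v (u - u') = X *\<^sub>v u - X *\<^sub>v u'" by (rule mult_minus_distrib_mat_vec[OF X u u'])
  have Ym: "Y *\<^sub>v (v - v') = Y *\<^sub>v v - Y *\<^sub>v v'" by (rule mult_minus_distrib_mat_vec[OF Y v v'])
  have eq0: "X *\<^sub>v (u - u') + Y *\<^sub>v (v - v') = 0\<^sub>v n"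
  proof (rule eq_vecI)
    fix i assume "i < dim_vec (0\<^sub>v n :: 'a vec)"
    hence i: "i < n" by simp
    have "(X *\<^sub>v u) $ i + (Y *\<^sub>v v) $ i = (X *\<^sub>v u') $ i + (Y *\<^sub>v v') $ i"
      using arg_cong[OF e, of "\<lambda>w. w $ i"] i X Y by simp
    hence "((X *\<^sub>v u) $ i - (X *\<^sub>v u') $ i) + ((Y *\<^sub>v v) $ i - (Y *\<^sub>v v') $ i) = 0"
      by (metis add_diff_add diff_self)
    thus "(X *\<^sub>v (u - u') + Y *\<^sub>v (v - v')) $ i = 0\<^sub>v n $ i"
      unfolding Xm Ym using i X Y by simp
  qed (use X Y in simp)
  have "u - u' = 0\<^sub>v a" using recovers_firstD[OF R X Y _ _ eq0] u u' v v' by simp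
  thus ?thesis using u u' by (rule vec_eq_of_minus_eq_zero)
qed

lemma recovers_first_of_col_indep:
  assumes X: "X \<in> carrier_mat n a" and Y: "Y \<in> carrier_mat n b"
    and I: "col_indep n (cols X @ cols Y)"
  shows "recovers_first X Y"
  using I X Y mat_of_cols_cols[of X] mat_of_cols_cols[of Y]
  unfolding col_indep_append_iff recovers_first_def by simp

lemma recovers_first_mult:
  assumes C: "C \<in> carrier_mat n a" and D: "D \<in> carrier_mat n b" and CD: "recovers_first C D"
    and Q: "Q \<in> carrier_mat a r" and IQ: "col_indep a (cols Q)"
    and Y: "Y \<in> carrier_mat n m" and span: "colspan n (cols Y) \<subseteq> colspan n (cols D)"
  shows "recovers_first (C * Q) Y"
  unfolding recovers_first_def
proof (intro ballI impI)
  fix x y assume x: "x \<in> carrier_vec (dim_col (C * Q))" and y: "y \<in> carrier_vec (dim_col Y)"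
    and e: "(C * Q) *\<^sub>v x + Y *\<^sub>v y = 0\<^sub>v (dim_row (C * Q))"
  have "Y *\<^sub>v y \<in> colspan n (cols Y)" unfolding colspan_cols[OF Y] using y Y by simp
  hence "Y *\<^sub>v y \<in> colspan n (cols D)" using span by blast
  then obtain z where z: "z \<in> carrier_vec b" "Y *\<^sub>v y = D *\<^sub>v z" using colspan_cols[OF D] by auto
  have "C *\<^sub>v (Q *\<^sub>v x) + D *\<^sub>v z = 0\<^sub>v n" using e z(2) C Q x by simp
  hence "Q *\<^sub>v x = 0\<^sub>v a" using recovers_firstD[OF CD C D] Q x z(1) by simp
  thus "x = 0\<^sub>v (dim_col (C * Q))" using IQ x Q unfolding col_indep_cols_iff[OF Q] by simp
qed

lemma col_indep_of_mult:
  assumes X: "X \<in> carrier_mat n a" and Q: "Q \<in> carrier_mat a r"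
    and I: "col_indep n (cols (X * Q))"
  shows "col_indep a (cols Q)"
  unfolding col_indep_cols_iff[OF Q]
proof (intro ballI impI)
  fix x assume x: "x \<in> carrier_vec r" and Qx: "Q *\<^sub>v x = 0\<^sub>v a"
  have "(X * Q) *\<^sub>v x = X *\<^sub>v (Q *\<^sub>v x)" using X Q x by simp
  also have "\<dots> = 0\<^sub>v n" unfolding Qx using X by auto
  finally show "x = 0\<^sub>v r" using I x unfolding col_indep_cols_iff[OF mult_carrier_mat[OF X Q]] by blast
qed

text \<open>First A is
  greedily extended inside span B as far as possible (up to R2 vectors), then these vectors are
  extended to R2 independent vectors of span B; the span of the result together with A has
  dimension at least R1 + R2, which allows a final greedy choice inside span A.\<close>
lemma choose_code_vectors:
  fixes A B :: "'a::{field,finite} mat"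
  assumes A: "A \<in> carrier_mat n a" and IA: "col_indep n (cols A)" and B: "B \<in> carrier_mat n m"
    and R1: "R1 \<le> a" and R2: "R2 \<le> mrank B" and R12: "R1 + R2 \<le> mrank (hcat A B)"
  shows "\<exists>W P. length W = R2 \<and> set W \<subseteq> colspan n (cols B) \<and>
               length P = R1 \<and> set P \<subseteq> colspan n (cols A) \<and> col_indep n (W @ P)"
proof -
  let ?q = "CARD('a)"
  have q: "1 < ?q" by (rule one_less_card_field)
  define r where "r = mrank (hcat A B)"
  have card_AB: "card (colspan n (cols A @ cols B)) = ?q ^ r"
    using card_colspan_rank[OF hcat_carrier[OF A B]] cols_hcat[OF A B] unfolding r_def by simp
  have "?q ^ a = card (colspan n (cols A))" using IA A unfolding col_indep_iff_card_colspan by simp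
  also have "\<dots> \<le> ?q ^ r" unfolding card_AB[symmetric] by (intro card_mono finite_colspan colspan_append_left)
  finally have a_r: "a \<le> r" using power_le_imp_le_exp[OF q] by blast
  define j where "j = min R2 (r - a)"
  have j_R2: "j \<le> R2" and aj_r: "a + j \<le> r" and R12_aj: "R2 + R1 \<le> a + j"
    using a_r R1 R12 unfolding j_def r_def by auto
  have "?q ^ (length (cols A) + j) \<le> card (colspan n (cols A @ cols B))"
    unfolding card_AB using A aj_r q by (intro power_increasing) auto
  from col_indep_extend[OF IA this] obtain ws1 where ws1: "length ws1 = j"
    "set ws1 \<subseteq> colspan n (cols B)" "col_indep n (cols A @ ws1)" by blast
  have "?q ^ (length ws1 + (R2 - j)) \<le> ?q ^ mrank B"
    using ws1(1) j_R2 R2 q by (intro power_increasing) auto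
  also have "\<dots> = card (colspan n (cols B))" using card_colspan_rank[OF B] by simp
  also have "\<dots> \<le> card (colspan n (ws1 @ cols B))" by (intro card_mono finite_colspan colspan_append_right)
  finally have "?q ^ (length ws1 + (R2 - j)) \<le> card (colspan n (ws1 @ cols B))" .
  from col_indep_extend[OF col_indep_appendD(2)[OF ws1(3)] this]
  obtain ws2 where ws2: "length ws2 = R2 - j" "set ws2 \<subseteq> colspan n (cols B)"
    "col_indep n (ws1 @ ws2)" by blast
  define W where "W = ws1 @ ws2"
  have W: "length W = R2" "set W \<subseteq> colspan n (cols B)" "col_indep n W"
    using ws1 ws2 j_R2 unfolding W_def by auto
  have "?q ^ (length W + R1) \<le> ?q ^ (a + j)"
    using W(1) R12_aj q by (intro power_increasing) auto
  also have "\<dots> = card (colspan n (cols A @ ws1))"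
    using ws1(3)[unfolded col_indep_iff_card_colspan] A ws1(1) by simp
  also have "\<dots> \<le> card (colspan n ((cols A @ ws1) @ ws2))"
    by (intro card_mono finite_colspan colspan_append_left)
  also have "colspan n ((cols A @ ws1) @ ws2) = colspan n (W @ cols A)"
    unfolding W_def using colspan_append_commute[of n "cols A" "ws1 @ ws2"] by simp
  finally have "?q ^ (length W + R1) \<le> card (colspan n (W @ cols A))" .
  from col_indep_extend[OF W(3) this]
  obtain P where "length P = R1" "set P \<subseteq> colspan n (cols A)" "col_indep n (W @ P)" by blast
  thus ?thesis using W by blast
qed

lemma source_reencoding:
  fixes H11 H12 H21 H22 M1 M2 :: "'a::{field,finite} mat"
  assumes H11: "H11 \<in> carrier_mat n1 m1" and H12: "H12 \<in> carrier_mat n1 m2"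
    and H21: "H21 \<in> carrier_mat n2 m1" and H22: "H22 \<in> carrier_mat n2 m2"
    and M1: "M1 \<in> carrier_mat m1 a1" and M2: "M2 \<in> carrier_mat m2 a2"
    and rH12: "mrank H12 = a2" and rHM1: "mrank (hcat (H11 * M1) (H12 * M2)) = a1 + a2"
    and rA: "mrank (H21 * M1) = a1"
    and R1: "R1 \<le> a1" and R2: "R2 \<le> mrank H22" and R12: "R1 + R2 \<le> mrank (hcat (H21 * M1) H22)"
  shows "\<exists>M1' \<in> carrier_mat m1 R1. \<exists>M2' \<in> carrier_mat m2 R2.
           recovers_first (H11 * M1') (H12 * M2') \<and> recovers_first (H22 * M2') (H21 * M1')"
proof -
  define A where "A = H21 * M1"
  define C where "C = H11 * M1"
  define D where "D = H12 * M2"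
  have A: "A \<in> carrier_mat n2 a1" and C: "C \<in> carrier_mat n1 a1" and D: "D \<in> carrier_mat n1 a2"
    using H11 H12 H21 M1 M2 by (simp_all add: A_def C_def D_def)
  have IA: "col_indep n2 (cols A)" using rA full_rank_iff_col_indep[OF A] by (simp add: A_def)
  obtain W P where W: "length W = R2" "set W \<subseteq> colspan n2 (cols H22)"
    and P: "length P = R1" "set P \<subseteq> colspan n2 (cols A)" and WP: "col_indep n2 (W @ P)"
    using choose_code_vectors[OF A IA H22 R1 R2 R12[folded A_def]] by blast
  obtain M2' where M2': "M2' \<in> carrier_mat m2 R2" and H22M2': "H22 * M2' = mat_of_cols n2 W"
    using factor_through_colspan[OF H22 W(2)] W(1) by blast
  obtain Q where Q: "Q \<in> carrier_mat a1 R1" and AQ: "A * Q = mat_of_cols n2 P"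
    using factor_through_colspan[OF A P(2)] P(1) by blast
  define M1' where "M1' = M1 * Q"
  have M1': "M1' \<in> carrier_mat m1 R1" using M1 Q by (simp add: M1'_def)
  have H21M1': "H21 * M1' = mat_of_cols n2 P"
    using H21 M1 Q AQ by (simp add: M1'_def A_def assoc_mult_mat)
  have H11M1': "H11 * M1' = C * Q"
    using H11 M1 Q by (simp add: M1'_def C_def assoc_mult_mat)
  have W_carrier: "set W \<subseteq> carrier_vec n2" and P_carrier: "set P \<subseteq> carrier_vec n2"
    using W(2) P(2) colspan_carrier by blast+
  have "recovers_first (mat_of_cols n2 W) (mat_of_cols n2 P)"
    by (rule recovers_first_of_col_indep) (use W_carrier P_carrier WP in auto)
  hence t2: "recovers_first (H22 * M2') (H21 * M1')" unfolding H22M2' H21M1' .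
  have "col_indep n1 (cols C @ cols D)"
    using rHM1 full_rank_iff_col_indep[OF hcat_carrier[OF C D]] cols_hcat[OF C D]
    by (simp add: C_def D_def)
  hence CD: "recovers_first C D" by (rule recovers_first_of_col_indep[OF C D])
  have "col_indep n2 (cols (A * Q))" using AQ col_indep_appendD(2)[OF WP] P_carrier by simp
  hence IQ: "col_indep a1 (cols Q)" by (rule col_indep_of_mult[OF A Q])
  have "mrank (H12 * M2) = mrank H12"
    using full_rank_hcat(2)[OF C D] rHM1 rH12 by (simp add: C_def D_def)
  hence "colspan n1 (cols D) = colspan n1 (cols H12)"
    unfolding D_def by (rule colspan_mult_eq[OF H12 M2])
  hence "colspan n1 (cols (H12 * M2')) \<subseteq> colspan n1 (cols D)"
    using colspan_mult_subset[OF H12 M2'] by simp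
  hence t1: "recovers_first (H11 * M1') (H12 * M2')"
    unfolding H11M1' by (rule recovers_first_mult[OF C D CD Q IQ mult_carrier_mat[OF H12 M2']])
  show ?thesis using t1 t2 M1' M2' by blast
qed

section \<open>Linearity of network codes on acyclic networks\<close>

lemma mat_mult_vec_index:
  assumes "a < n" and "Y \<in> carrier_vec m"
  shows "(mat n m f *\<^sub>v Y) $ a = (\<Sum>b<m. f (a, b) * Y $ b)"
  using assms by (simp add: scalar_prod_def lessThan_atLeast0)

lemma sum_unit_vec_coeffs:
  assumes "b' < k"
  shows "(\<Sum>b<k. Y $ b * unit_vec k b $ b') = (Y $ b' :: 'a::comm_ring_1)"
proof -
  have "(\<Sum>b<k. Y $ b * unit_vec k b $ b') = (\<Sum>b<k. if b = b' then Y $ b else 0)"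
    by (rule sum.cong[OF refl]) (use assms in \<open>auto simp: unit_vec_def\<close>)
  also have "\<dots> = Y $ b'" using assms by simp
  finally show ?thesis .
qed

locale linear_network_code =
  fixes E :: "'e set" and tailv headv :: "'e \<Rightarrow> 'v" and s1 s2 :: 'v
    and out1 out2 :: "nat \<Rightarrow> 'e" and k1 k2 :: nat
    and beta :: "'e \<Rightarrow> 'e \<Rightarrow> 'a::field"
  assumes finite_E: "finite E"
    and acyclic_E: "acyclic (edge_rel E tailv headv)"
    and sources_distinct: "s1 \<noteq> s2"
    and enum_out1: "bij_betw out1 {..<k1} (out_edges E tailv s1)"
    and enum_out2: "bij_betw out2 {..<k2} (out_edges E tailv s2)"
begin

definition flow_eqs :: "(nat \<Rightarrow> 'a) \<Rightarrow> (nat \<Rightarrow> 'a) \<Rightarrow> ('e \<Rightarrow> 'a) \<Rightarrow> bool" where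
  "flow_eqs y1 y2 x \<longleftrightarrow>
     (\<forall>b < k1. x (out1 b) = y1 b) \<and>
     (\<forall>b < k2. x (out2 b) = y2 b) \<and>
     (\<forall>e \<in> E. tailv e \<noteq> s1 \<and> tailv e \<noteq> s2 \<longrightarrow>
         x e = (\<Sum>e' \<in> in_edges E headv (tailv e). beta e' e * x e')) \<and>
     (\<forall>e. e \<notin> E \<longrightarrow> x e = 0)"

lemma consistent_flow_iff:
  assumes "dim_vec Y1 = k1" "dim_vec Y2 = k2"
  shows "consistent_flow E tailv headv s1 s2 out1 out2 beta Y1 Y2 x \<longleftrightarrow>
    flow_eqs (\<lambda>b. Y1 $ b) (\<lambda>b. Y2 $ b) x"
  unfolding consistent_flow_def flow_eqs_def using assms by simp

definition feeds :: "('e \<times> 'e) set" where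
  "feeds = {(e', e). e' \<in> E \<and> e \<in> E \<and> headv e' = tailv e}"

lemma wf_feeds: "wf feeds"
proof -
  have "edge_rel E tailv headv = (\<lambda>e. (tailv e, headv e)) ` E" unfolding edge_rel_def by auto
  hence "wf (edge_rel E tailv headv)" using finite_E acyclic_E by (simp add: finite_acyclic_wf)
  hence "wf (inv_image (edge_rel E tailv headv) tailv)" by simp
  moreover have "feeds \<subseteq> inv_image (edge_rel E tailv headv) tailv"
    unfolding feeds_def inv_image_def edge_rel_def by auto
  ultimately show ?thesis by (rule wf_subset)
qed

lemma in_edges_feeds: "e \<in> E \<Longrightarrow> e' \<in> in_edges E headv (tailv e) \<Longrightarrow> (e', e) \<in> feeds"
  unfolding feeds_def in_edges_def by auto

lemma source_edge1: "e \<in> E \<Longrightarrow> tailv e = s1 \<Longrightarrow> \<exists>b<k1. e = out1 b"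
  using bij_betw_imp_surj_on[OF enum_out1] unfolding out_edges_def by blast

lemma source_edge2: "e \<in> E \<Longrightarrow> tailv e = s2 \<Longrightarrow> \<exists>b<k2. e = out2 b"
  using bij_betw_imp_surj_on[OF enum_out2] unfolding out_edges_def by blast

lemma flow_eqs_unique:
  assumes x: "flow_eqs y1 y2 x" and x': "flow_eqs y1 y2 x'"
  shows "x = x'"
proof
  fix e
  show "x e = x' e"
  proof (induction e rule: wf_induct[OF wf_feeds])
    case (1 e)
    consider "e \<notin> E" | "e \<in> E" "tailv e = s1" | "e \<in> E" "tailv e = s2"
      | "e \<in> E" "tailv e \<noteq> s1" "tailv e \<noteq> s2" by blast
    thus ?case
    proof cases
      case 2
      then obtain b where "b < k1" "e = out1 b" using source_edge1 by blast
      thus ?thesis using x x' unfolding flow_eqs_def by simp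
    next
      case 3
      then obtain b where "b < k2" "e = out2 b" using source_edge2 by blast
      thus ?thesis using x x' unfolding flow_eqs_def by simp
    next
      case 4
      have "x e = (\<Sum>e' \<in> in_edges E headv (tailv e). beta e' e * x e')"
        using x 4 unfolding flow_eqs_def by blast
      also have "\<dots> = (\<Sum>e' \<in> in_edges E headv (tailv e). beta e' e * x' e')"
        by (rule sum.cong[OF refl]) (use 1 in_edges_feeds[OF 4(1)] in simp)
      also have "\<dots> = x' e" using x' 4 unfolding flow_eqs_def by simp
      finally show ?thesis .
    qed (use x x' in \<open>simp add: flow_eqs_def\<close>)
  qed
qed

definition flow_step :: "(nat \<Rightarrow> 'a) \<Rightarrow> (nat \<Rightarrow> 'a) \<Rightarrow> ('e \<Rightarrow> 'a) \<Rightarrow> 'e \<Rightarrow> 'a" where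
  "flow_step y1 y2 g e =
     (if e \<notin> E then 0
      else if tailv e = s1 then y1 (inv_into {..<k1} out1 e)
      else if tailv e = s2 then y2 (inv_into {..<k2} out2 e)
      else (\<Sum>e' \<in> in_edges E headv (tailv e). beta e' e * g e'))"

lemma flow_eqs_exists: "flow_eqs y1 y2 (wfrec feeds (flow_step y1 y2))"
proof -
  define x where "x = wfrec feeds (flow_step y1 y2)"
  have xe: "x e = flow_step y1 y2 (cut x feeds e) e" for e
    unfolding x_def by (rule wfrec[OF wf_feeds])
  have "flow_eqs y1 y2 x" unfolding flow_eqs_def
  proof (intro conjI allI impI ballI)
    fix b assume b: "b < k1"
    have "out1 b \<in> out_edges E tailv s1" using bij_betwE[OF enum_out1] b by blast
    moreover have "inv_into {..<k1} out1 (out1 b) = b"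
      using inv_into_f_f[OF bij_betw_imp_inj_on[OF enum_out1]] b by simp
    ultimately show "x (out1 b) = y1 b" using xe[of "out1 b"] unfolding flow_step_def out_edges_def by simp
  next
    fix b assume b: "b < k2"
    have "out2 b \<in> out_edges E tailv s2" using bij_betwE[OF enum_out2] b by blast
    moreover have "inv_into {..<k2} out2 (out2 b) = b"
      using inv_into_f_f[OF bij_betw_imp_inj_on[OF enum_out2]] b by simp
    ultimately show "x (out2 b) = y2 b"
      using xe[of "out2 b"] sources_distinct unfolding flow_step_def out_edges_def by simp
  next
    fix e assume eE: "e \<in> E" and inner: "tailv e \<noteq> s1 \<and> tailv e \<noteq> s2"
    have "x e = (\<Sum>e' \<in> in_edges E headv (tailv e). beta e' e * cut x feeds e e')"
      using xe[of e] eE inner unfolding flow_step_def by simp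
    also have "\<dots> = (\<Sum>e' \<in> in_edges E headv (tailv e). beta e' e * x e')"
      by (rule sum.cong[OF refl]) (simp add: cut_apply in_edges_feeds[OF eE])
    finally show "x e = (\<Sum>e' \<in> in_edges E headv (tailv e). beta e' e * x e')" .
  next
    fix e assume "e \<notin> E"
    thus "x e = 0" using xe[of e] unfolding flow_step_def by simp
  qed
  thus ?thesis unfolding x_def .
qed

lemma flow_eqs_cong:
  assumes "\<And>b. b < k1 \<Longrightarrow> y1 b = z1 b" "\<And>b. b < k2 \<Longrightarrow> y2 b = z2 b"
  shows "flow_eqs y1 y2 x = flow_eqs z1 z2 x"
  unfolding flow_eqs_def using assms by simp

lemma flow_eqs_add:
  assumes "flow_eqs a1 a2 x" "flow_eqs b1 b2 x'"
  shows "flow_eqs (\<lambda>b. a1 b + b1 b) (\<lambda>b. a2 b + b2 b) (\<lambda>e. x e + x' e)"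
  using assms unfolding flow_eqs_def by (simp add: sum.distrib distrib_left)

lemma flow_eqs_lincomb:
  assumes "\<And>i. i \<in> I \<Longrightarrow> flow_eqs (y1 i) (y2 i) (x i)"
  shows "flow_eqs (\<lambda>b. \<Sum>i\<in>I. c i * y1 i b) (\<lambda>b. \<Sum>i\<in>I. c i * y2 i b) (\<lambda>e. \<Sum>i\<in>I. c i * x i e)"
  unfolding flow_eqs_def
proof (intro conjI allI impI ballI)
  fix e assume eE: "e \<in> E" and inner: "tailv e \<noteq> s1 \<and> tailv e \<noteq> s2"
  have "(\<Sum>i\<in>I. c i * x i e) =
      (\<Sum>i\<in>I. c i * (\<Sum>e' \<in> in_edges E headv (tailv e). beta e' e * x i e'))"
    by (rule sum.cong[OF refl]) (use assms eE inner in \<open>simp add: flow_eqs_def\<close>)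
  also have "\<dots> = (\<Sum>e' \<in> in_edges E headv (tailv e). beta e' e * (\<Sum>i\<in>I. c i * x i e'))"
    by (simp add: sum_distrib_left mult.left_commute sum.swap[of _ I])
  finally show "(\<Sum>i\<in>I. c i * x i e) =
      (\<Sum>e' \<in> in_edges E headv (tailv e). beta e' e * (\<Sum>i\<in>I. c i * x i e'))" .
qed (use assms in \<open>simp_all add: flow_eqs_def\<close>)

abbreviation symbols :: "'a vec \<Rightarrow> 'a vec \<Rightarrow> 'e \<Rightarrow> 'a" where
  "symbols \<equiv> edge_symbols E tailv headv s1 s2 out1 out2 beta"

lemma symbols_flow_eqs:
  assumes "dim_vec Y1 = k1" "dim_vec Y2 = k2"
  shows "flow_eqs (\<lambda>b. Y1 $ b) (\<lambda>b. Y2 $ b) (symbols Y1 Y2)"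
proof -
  have "\<exists>!x. consistent_flow E tailv headv s1 s2 out1 out2 beta Y1 Y2 x"
    unfolding consistent_flow_iff[OF assms] using flow_eqs_exists flow_eqs_unique by blast
  hence "consistent_flow E tailv headv s1 s2 out1 out2 beta Y1 Y2 (symbols Y1 Y2)"
    unfolding edge_symbols_def by (rule theI')
  thus ?thesis unfolding consistent_flow_iff[OF assms] .
qed

lemma symbols_superposition:
  assumes Y1: "Y1 \<in> carrier_vec k1" and Y2: "Y2 \<in> carrier_vec k2"
  shows "symbols Y1 Y2 = (\<lambda>e. (\<Sum>b<k1. Y1 $ b * symbols (unit_vec k1 b) (0\<^sub>v k2) e)
                             + (\<Sum>b<k2. Y2 $ b * symbols (0\<^sub>v k1) (unit_vec k2 b) e))"
proof (rule flow_eqs_unique[OF symbols_flow_eqs])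
  have "flow_eqs (\<lambda>b'. \<Sum>b<k1. Y1 $ b * unit_vec k1 b $ b') (\<lambda>b'. \<Sum>b<k1. Y1 $ b * 0\<^sub>v k2 $ b')
      (\<lambda>e. \<Sum>b<k1. Y1 $ b * symbols (unit_vec k1 b) (0\<^sub>v k2) e)"
    by (rule flow_eqs_lincomb) (simp add: symbols_flow_eqs)
  moreover have "flow_eqs (\<lambda>b'. \<Sum>b<k2. Y2 $ b * 0\<^sub>v k1 $ b') (\<lambda>b'. \<Sum>b<k2. Y2 $ b * unit_vec k2 b $ b')
      (\<lambda>e. \<Sum>b<k2. Y2 $ b * symbols (0\<^sub>v k1) (unit_vec k2 b) e)"
    by (rule flow_eqs_lincomb) (simp add: symbols_flow_eqs)
  ultimately have "flow_eqs
      (\<lambda>b'. (\<Sum>b<k1. Y1 $ b * unit_vec k1 b $ b') + (\<Sum>b<k2. Y2 $ b * 0\<^sub>v k1 $ b'))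
      (\<lambda>b'. (\<Sum>b<k1. Y1 $ b * 0\<^sub>v k2 $ b') + (\<Sum>b<k2. Y2 $ b * unit_vec k2 b $ b'))
      (\<lambda>e. (\<Sum>b<k1. Y1 $ b * symbols (unit_vec k1 b) (0\<^sub>v k2) e)
         + (\<Sum>b<k2. Y2 $ b * symbols (0\<^sub>v k1) (unit_vec k2 b) e))"
    by (rule flow_eqs_add)
  thus "flow_eqs (\<lambda>b. Y1 $ b) (\<lambda>b. Y2 $ b)
      (\<lambda>e. (\<Sum>b<k1. Y1 $ b * symbols (unit_vec k1 b) (0\<^sub>v k2) e)
         + (\<Sum>b<k2. Y2 $ b * symbols (0\<^sub>v k1) (unit_vec k2 b) e))"
    by (subst (asm) flow_eqs_cong) (simp_all add: sum_unit_vec_coeffs del: index_unit_vec)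
qed (use Y1 Y2 in auto)

lemma terminal_obs_linear:
  assumes Y1: "Y1 \<in> carrier_vec k1" and Y2: "Y2 \<in> carrier_vec k2"
  shows "terminal_obs E tailv headv s1 s2 out1 out2 beta inn n Y1 Y2 =
    transfer1 E tailv headv s1 s2 out1 out2 k1 k2 beta inn n *\<^sub>v Y1 +
    transfer2 E tailv headv s1 s2 out1 out2 k1 k2 beta inn n *\<^sub>v Y2"
proof (rule eq_vecI)
  fix a assume "a < dim_vec (transfer1 E tailv headv s1 s2 out1 out2 k1 k2 beta inn n *\<^sub>v Y1 +
      transfer2 E tailv headv s1 s2 out1 out2 k1 k2 beta inn n *\<^sub>v Y2)"
  hence a: "a < n" by (simp add: transfer1_def transfer2_def)
  have "(transfer1 E tailv headv s1 s2 out1 out2 k1 k2 beta inn n *\<^sub>v Y1) $ a =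
      (\<Sum>b<k1. Y1 $ b * symbols (unit_vec k1 b) (0\<^sub>v k2) (inn a))"
    unfolding transfer1_def mat_mult_vec_index[OF a Y1]
    by (rule sum.cong[OF refl]) (simp add: a terminal_obs_def mult.commute)
  moreover have "(transfer2 E tailv headv s1 s2 out1 out2 k1 k2 beta inn n *\<^sub>v Y2) $ a =
      (\<Sum>b<k2. Y2 $ b * symbols (0\<^sub>v k1) (unit_vec k2 b) (inn a))"
    unfolding transfer2_def mat_mult_vec_index[OF a Y2]
    by (rule sum.cong[OF refl]) (simp add: a terminal_obs_def mult.commute)
  ultimately show "terminal_obs E tailv headv s1 s2 out1 out2 beta inn n Y1 Y2 $ a =
      (transfer1 E tailv headv s1 s2 out1 out2 k1 k2 beta inn n *\<^sub>v Y1 +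
       transfer2 E tailv headv s1 s2 out1 out2 k1 k2 beta inn n *\<^sub>v Y2) $ a"
    using a Y1 Y2 by (simp add: terminal_obs_def transfer1_def transfer2_def symbols_superposition[OF Y1 Y2])
qed (simp add: terminal_obs_def transfer1_def transfer2_def)

lemma achievable_overI:
  fixes M1 M2 :: "'a mat" and in1 in2 :: "nat \<Rightarrow> 'e" and n1 n2 :: nat and t1 t2 :: 'v
  defines "H11 \<equiv> transfer1 E tailv headv s1 s2 out1 out2 k1 k2 beta in1 n1"
    and "H12 \<equiv> transfer2 E tailv headv s1 s2 out1 out2 k1 k2 beta in1 n1"
    and "H21 \<equiv> transfer1 E tailv headv s1 s2 out1 out2 k1 k2 beta in2 n2"
    and "H22 \<equiv> transfer2 E tailv headv s1 s2 out1 out2 k1 k2 beta in2 n2"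
  assumes n1: "card (in_edges E headv t1) = n1" and n2: "card (in_edges E headv t2) = n2"
    and M1: "M1 \<in> carrier_mat k1 R1" and M2: "M2 \<in> carrier_mat k2 R2"
    and dec1: "recovers_first (H11 * M1) (H12 * M2)"
    and dec2: "recovers_first (H22 * M2) (H21 * M1)"
  shows "achievable_over TYPE('a) E tailv headv s1 s2 t1 t2 out1 out2 in1 in2 R1 R2"
proof -
  have k1: "card (out_edges E tailv s1) = k1" using bij_betw_same_card[OF enum_out1] by simp
  have k2: "card (out_edges E tailv s2) = k2" using bij_betw_same_card[OF enum_out2] by simp
  have H: "H11 \<in> carrier_mat n1 k1" "H12 \<in> carrier_mat n1 k2"
    "H21 \<in> carrier_mat n2 k1" "H22 \<in> carrier_mat n2 k2"
    unfolding H11_def H12_def H21_def H22_def transfer1_def transfer2_def by simp_all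
  have obs: "terminal_obs E tailv headv s1 s2 out1 out2 beta inn n (M1 *\<^sub>v U1) (M2 *\<^sub>v U2) =
      (transfer1 E tailv headv s1 s2 out1 out2 k1 k2 beta inn n * M1) *\<^sub>v U1 +
      (transfer2 E tailv headv s1 s2 out1 out2 k1 k2 beta inn n * M2) *\<^sub>v U2"
    if U: "U1 \<in> carrier_vec R1" "U2 \<in> carrier_vec R2" for inn n U1 U2
  proof -
    have T: "transfer1 E tailv headv s1 s2 out1 out2 k1 k2 beta inn n \<in> carrier_mat n k1"
      "transfer2 E tailv headv s1 s2 out1 out2 k1 k2 beta inn n \<in> carrier_mat n k2"
      by (simp_all add: transfer1_def transfer2_def)
    show ?thesis
      using terminal_obs_linear[of "M1 *\<^sub>v U1" "M2 *\<^sub>v U2" inn n] M1 M2 U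
        assoc_mult_mat_vec[OF T(1) M1 U(1)] assoc_mult_mat_vec[OF T(2) M2 U(2)] by simp
  qed
  have obs1: "terminal_obs E tailv headv s1 s2 out1 out2 beta in1 n1 (M1 *\<^sub>v U1) (M2 *\<^sub>v U2) =
      (H11 * M1) *\<^sub>v U1 + (H12 * M2) *\<^sub>v U2"
    if "U1 \<in> carrier_vec R1" "U2 \<in> carrier_vec R2" for U1 U2
    using obs[OF that] unfolding H11_def H12_def .
  have obs2: "terminal_obs E tailv headv s1 s2 out1 out2 beta in2 n2 (M1 *\<^sub>v U1) (M2 *\<^sub>v U2) =
      (H22 * M2) *\<^sub>v U2 + (H21 * M1) *\<^sub>v U1"
    if U: "U1 \<in> carrier_vec R1" "U2 \<in> carrier_vec R2" for U1 U2
  proof -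
    have "(H21 * M1) *\<^sub>v U1 \<in> carrier_vec n2" "(H22 * M2) *\<^sub>v U2 \<in> carrier_vec n2"
      using H(3,4) M1 M2 U by simp_all
    thus ?thesis using obs[OF U] comm_add_vec unfolding H21_def H22_def by metis
  qed
  have dec_t1: "U1 = U1'"
    if U: "U1 \<in> carrier_vec R1" "U1' \<in> carrier_vec R1" "U2 \<in> carrier_vec R2" "U2' \<in> carrier_vec R2"
      and "terminal_obs E tailv headv s1 s2 out1 out2 beta in1 n1 (M1 *\<^sub>v U1) (M2 *\<^sub>v U2) =
           terminal_obs E tailv headv s1 s2 out1 out2 beta in1 n1 (M1 *\<^sub>v U1') (M2 *\<^sub>v U2')"
    for U1 U1' U2 U2'
    using that(5) unfolding obs1[OF U(1,3)] obs1[OF U(2,4)]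
    by (rule recovers_first_injective[OF mult_carrier_mat[OF H(1) M1] mult_carrier_mat[OF H(2) M2]
          dec1 U(1,2,3,4)])
  have dec_t2: "U2 = U2'"
    if U: "U1 \<in> carrier_vec R1" "U1' \<in> carrier_vec R1" "U2 \<in> carrier_vec R2" "U2' \<in> carrier_vec R2"
      and "terminal_obs E tailv headv s1 s2 out1 out2 beta in2 n2 (M1 *\<^sub>v U1) (M2 *\<^sub>v U2) =
           terminal_obs E tailv headv s1 s2 out1 out2 beta in2 n2 (M1 *\<^sub>v U1') (M2 *\<^sub>v U2')"
    for U1 U1' U2 U2'
    using that(5) unfolding obs2[OF U(1,3)] obs2[OF U(2,4)]
    by (rule recovers_first_injective[OF mult_carrier_mat[OF H(4) M2] mult_carrier_mat[OF H(3) M1]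
          dec2 U(3,4,1,2)])
  show ?thesis
    unfolding achievable_over_def Let_def k1 k2 n1 n2
    by (intro exI[of _ beta] exI[of _ M1] exI[of _ M2]) (use M1 M2 dec_t1 dec_t2 in blast)
qed

end

theorem corollary1:
  fixes E :: "'e set" and tailv headv :: "'e \<Rightarrow> 'v" and s1 s2 t1 t2 :: 'v
    and out1 out2 in1 in2 :: "nat \<Rightarrow> 'e"
    and beta :: "'e \<Rightarrow> 'e \<Rightarrow> 'a::{field,finite}"
    and M1 M2 :: "'a mat"
  defines "k1_2 \<equiv> mincut E tailv headv {s1} {t2}"
    and "k2_1 \<equiv> mincut E tailv headv {s2} {t1}"
    and "k1_1 \<equiv> mincut E tailv headv {s1} {t1}"
    and "k2_2 \<equiv> mincut E tailv headv {s2} {t2}"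
    and "k12_1 \<equiv> mincut E tailv headv {s1, s2} {t1}"
    and "k12_2 \<equiv> mincut E tailv headv {s1, s2} {t2}"
    and "k1_12 \<equiv> mincut E tailv headv {s1} {t1, t2}"
    and "k2_12 \<equiv> mincut E tailv headv {s2} {t1, t2}"
  defines "H11 \<equiv> transfer1 E tailv headv s1 s2 out1 out2 k1_12 k2_12 beta in1 k12_1"
    and "H12 \<equiv> transfer2 E tailv headv s1 s2 out1 out2 k1_12 k2_12 beta in1 k12_1"
    and "H21 \<equiv> transfer1 E tailv headv s1 s2 out1 out2 k1_12 k2_12 beta in2 k12_2"
    and "H22 \<equiv> transfer2 E tailv headv s1 s2 out1 out2 k1_12 k2_12 beta in2 k12_2"
  defines "R2ss \<equiv> k2_1"
    and "R1ss \<equiv> min k12_1 k12_2 - k2_1"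
  assumes net: "two_unicast_network E tailv headv s1 s2 t1 t2"
    and enum_out1: "bij_betw out1 {..<k1_12} (out_edges E tailv s1)"
    and enum_out2: "bij_betw out2 {..<k2_12} (out_edges E tailv s2)"
    and enum_in1: "bij_betw in1 {..<k12_1} (in_edges E headv t1)"
    and enum_in2: "bij_betw in2 {..<k12_2} (in_edges E headv t2)"
    and cond1: "k1_2 + k2_1 \<ge> min k12_1 k12_2"
    and cond2: "k2_1 \<le> k2_2"
    and rH11: "mrank H11 = k1_1" and rH12: "mrank H12 = k2_1"
    and rH21: "mrank H21 = k1_2" and rH22: "mrank H22 = k2_2"
    and rH1: "mrank (hcat H11 H12) = k12_1"
    and rH2: "mrank (hcat H21 H22) = k12_2"
    and M1: "M1 \<in> carrier_mat k1_12 R1ss" and rM1: "mrank M1 = R1ss"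
    and M2: "M2 \<in> carrier_mat k2_12 R2ss" and rM2: "mrank M2 = R2ss"
    and rHM1: "mrank (hcat (H11 * M1) (H12 * M2)) = R1ss + R2ss"
    and rHM2: "mrank (hcat (H21 * M1) (H22 * M2)) = R1ss + R2ss"
  shows "\<forall>R1 R2 :: nat. R1 \<le> min k12_1 k12_2 - k2_1 \<and> R2 \<le> k2_2 \<and>
           R1 + R2 \<le> mrank (hcat (H21 * M1) H22) \<longrightarrow>
           achievable_over TYPE('a) E tailv headv s1 s2 t1 t2 out1 out2 in1 in2 R1 R2"
proof (intro allI impI)
  fix R1 R2 :: nat
  assume R: "R1 \<le> min k12_1 k12_2 - k2_1 \<and> R2 \<le> k2_2 \<and> R1 + R2 \<le> mrank (hcat (H21 * M1) H22)"
  have card_in: "card (in_edges E headv t1) = k12_1" "card (in_edges E headv t2) = k12_2"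
    using net unfolding two_unicast_network_def k12_1_def k12_2_def by auto
  interpret linear_network_code E tailv headv s1 s2 out1 out2 k1_12 k2_12 beta
    using net enum_out1 enum_out2 by unfold_locales (auto simp: two_unicast_network_def)
  have H: "H11 \<in> carrier_mat k12_1 k1_12" "H12 \<in> carrier_mat k12_1 k2_12"
    "H21 \<in> carrier_mat k12_2 k1_12" "H22 \<in> carrier_mat k12_2 k2_12"
    unfolding H11_def H12_def H21_def H22_def transfer1_def transfer2_def by simp_all
  have "mrank (H21 * M1) = R1ss"
    using full_rank_hcat(1)[OF mult_carrier_mat[OF H(3) M1] mult_carrier_mat[OF H(4) M2] rHM2] .
  moreover have "R1 \<le> R1ss" "R2 \<le> mrank H22" "R1 + R2 \<le> mrank (hcat (H21 * M1) H22)"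
    using R rH22 unfolding R1ss_def by simp_all
  ultimately obtain M1' M2' where "M1' \<in> carrier_mat k1_12 R1" "M2' \<in> carrier_mat k2_12 R2"
    "recovers_first (H11 * M1') (H12 * M2')" "recovers_first (H22 * M2') (H21 * M1')"
    using source_reencoding[OF H M1 M2 rH12[folded R2ss_def] rHM1] by blast
  thus "achievable_over TYPE('a) E tailv headv s1 s2 t1 t2 out1 out2 in1 in2 R1 R2"
    using achievable_overI[OF card_in] unfolding H11_def H12_def H21_def H22_def by blast
qed

end
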